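(* For $1<p\le 2$ and $1\le q\le 2$, the pair $(\ell_p^2(\mathbb{R}),\ell_q^2(\mathbb{R}))$ fails the uniform sBPBp.
   Context: $\ell_p^2(\mathbb{R})$ denotes $\mathbb{R}^2$ with the norm $\|(x,y)\|_p=(|x|^p+|y|^p)^{1/p}$; $S_X$ is the unit sphere of $X$ and $\mathcal{L}(X,Y)$ the bounded linear operators. A pair of Banach spaces $(X,Y)$ has the uniform strong Bishop–Phelps–Bollobás property (uniform sBPBp) if for every $\varepsilon>0$ there exists $\eta(\varepsilon)>0$ such that whenever $T\in\mathcal{L}(X,Y)$ with $\|T\|=1$ and $x_0\in S_X$ satisfy $\|T(x_0)\|>1-\eta(\varepsilon)$, there exists $x_1\in S_X$ with $\|T(x_1)\|=1$ and $\|x_1-x_0\|<\varepsilon$. *)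

theory Defs
  imports "HOL-Analysis.Analysis"
begin

definition lp_norm :: "real \<Rightarrow> real \<times> real \<Rightarrow> real" where
  "lp_norm p v = (\<bar>fst v\<bar> powr p + \<bar>snd v\<bar> powr p) powr (1 / p)"

definition op_norm :: "('a \<Rightarrow> real) \<Rightarrow> ('b \<Rightarrow> real) \<Rightarrow> ('a \<Rightarrow> 'b) \<Rightarrow> real" where
  "op_norm nX nY T = Sup ((\<lambda>x. nY (T x)) ` {x. nX x = 1})"

text \<open>In the applications all spaces are
  finite-dimensional, so every linear map is bounded.\<close>
definition uniform_sBPBp ::
  "('a::real_vector \<Rightarrow> real) \<Rightarrow> ('b::real_vector \<Rightarrow> real) \<Rightarrow> bool" where
  "uniform_sBPBp nX nY \<longleftrightarrow>
     (\<forall>\<epsilon>>0. \<exists>\<eta>>0. \<forall>T x0.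
        linear T \<and> op_norm nX nY T = 1 \<and> nX x0 = 1 \<and> nY (T x0) > 1 - \<eta> \<longrightarrow>
        (\<exists>x1. nX x1 = 1 \<and> nY (T x1) = 1 \<and> nX (x1 - x0) < \<epsilon>))"

end

theory Submission
  imports Defs
begin

text \<open>
  If \<open>p \<le> q\<close>, the operator \<open>(x, y) \<mapsto> (x, c y)\<close> with \<open>c < 1\<close> close to \<open>1\<close> has norm \<open>1\<close>,
  attained only at \<open>(\<plusminus>1, 0)\<close>, but it almost attains it at the far away point \<open>(0, 1)\<close>.

  If \<open>q < p\<close>, the \<open>q\<close>-norm on the \<open>p\<close>-sphere is largest at the antidiagonal unit vector
  \<open>x\<^sub>0 = antidiag_unit p\<close> (power mean inequality). The map \<open>(x, y) \<mapsto> (x + c y, y + c x)\<close>,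
  normalised to norm \<open>1\<close>, sends \<open>x\<^sub>0\<close> to a vector of norm at least \<open>(1 - c) / (1 + c)\<close>; but changing the sign of one coordinate of a
  vector with coordinates of opposite signs strictly increases its image, so every vector at
  which the norm is attained lies in the closed first or third quadrant, at distance at least
  \<open>1/2\<close> from \<open>x\<^sub>0\<close>.
\<close>

lemma convex_on_powr_nonneg:
  fixes s :: real
  assumes "1 \<le> s"
  shows "convex_on {0..} (\<lambda>x. x powr s)"
proof (rule convex_on_linorderI)
  fix t x y :: real
  assume t: "0 < t" "t < 1" and x: "x \<in> {0..}" and y: "y \<in> {0..}" and "x < y"
  show "((1 - t) *\<^sub>R x + t *\<^sub>R y) powr s \<le> (1 - t) * x powr s + t * y powr s"
  proof (cases "x = 0")
    case True
    have "(t * y) powr s = t powr s * y powr s"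
      by (rule powr_mult)
    also have "\<dots> \<le> t * y powr s"
      using t assms powr_le_one_le[of t s] by (intro mult_right_mono) auto
    finally show ?thesis using True by simp
  next
    case False
    then have "x \<in> {0<..}" "y \<in> {0<..}" using x \<open>x < y\<close> by auto
    from convex_onD[OF powr_convex[OF assms] _ _ this] t show ?thesis by simp
  qed
qed simp

lemma powr_abs_convex_comb_le:
  fixes a b s t :: real
  assumes "1 \<le> s" "0 \<le> t" "t \<le> 1"
  shows "\<bar>(1 - t) * a + t * b\<bar> powr s \<le> (1 - t) * \<bar>a\<bar> powr s + t * \<bar>b\<bar> powr s"
proof -
  have "\<bar>(1 - t) * a + t * b\<bar> \<le> (1 - t) * \<bar>a\<bar> + t * \<bar>b\<bar>"
    using assms by (metis abs_mult abs_of_nonneg abs_triangle_ineq diff_ge_0_iff_ge)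
  then have "\<bar>(1 - t) * a + t * b\<bar> powr s \<le> ((1 - t) * \<bar>a\<bar> + t * \<bar>b\<bar>) powr s"
    using assms by (intro powr_mono2) auto
  also have "\<dots> \<le> (1 - t) * \<bar>a\<bar> powr s + t * \<bar>b\<bar> powr s"
    using convex_onD[OF convex_on_powr_nonneg[OF assms(1)], of t "\<bar>a\<bar>" "\<bar>b\<bar>"] assms by simp
  finally show ?thesis .
qed

lemma lp_norm_nonneg: "0 \<le> lp_norm p v"
  unfolding lp_norm_def by simp

lemma lp_norm_powr:
  assumes "0 < p"
  shows "lp_norm p v powr p = \<bar>fst v\<bar> powr p + \<bar>snd v\<bar> powr p"
  using assms unfolding lp_norm_def by (simp add: powr_powr)

lemma abs_fst_le_lp_norm:
  assumes "0 < p"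
  shows "\<bar>fst v\<bar> \<le> lp_norm p v"
proof -
  have "\<bar>fst v\<bar> = (\<bar>fst v\<bar> powr p) powr (1 / p)"
    using assms by (simp add: powr_powr)
  also have "\<dots> \<le> lp_norm p v"
    unfolding lp_norm_def using assms by (intro powr_mono2) auto
  finally show ?thesis .
qed

lemma lp_norm_swap: "lp_norm p (prod.swap v) = lp_norm p v"
  unfolding lp_norm_def by (simp add: add.commute)

lemma abs_snd_le_lp_norm:
  assumes "0 < p"
  shows "\<bar>snd v\<bar> \<le> lp_norm p v"
  using abs_fst_le_lp_norm[OF assms, of "prod.swap v"] by (simp add: lp_norm_swap)

lemma lp_norm_scaleR:
  assumes "0 < p"
  shows "lp_norm p (s *\<^sub>R v) = \<bar>s\<bar> * lp_norm p v"
proof -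
  have "\<bar>fst (s *\<^sub>R v)\<bar> powr p + \<bar>snd (s *\<^sub>R v)\<bar> powr p
        = \<bar>s\<bar> powr p * (\<bar>fst v\<bar> powr p + \<bar>snd v\<bar> powr p)"
    by (simp add: abs_mult powr_mult distrib_left)
  then show ?thesis
    using assms unfolding lp_norm_def by (simp add: powr_mult powr_powr)
qed

lemma lp_norm_Pair_zero_snd:
  assumes "0 < p"
  shows "lp_norm p (x, 0) = \<bar>x\<bar>"
  using assms unfolding lp_norm_def by (simp add: powr_powr)

lemma lp_norm_Pair_zero_fst:
  assumes "0 < p"
  shows "lp_norm p (0, y) = \<bar>y\<bar>"
  using lp_norm_Pair_zero_snd[OF assms, of y] lp_norm_swap[of p "(0, y)"] by simp

lemma lp_norm_Pair_minus:
  assumes "0 < p"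
  shows "lp_norm p (a, - a) = 2 powr (1 / p) * \<bar>a\<bar>"
  using assms unfolding lp_norm_def by (simp add: powr_mult powr_powr)

lemma lp_norm_mono:
  assumes "0 < p" "\<bar>fst u\<bar> \<le> \<bar>fst v\<bar>" "\<bar>snd u\<bar> \<le> \<bar>snd v\<bar>"
  shows "lp_norm p u \<le> lp_norm p v"
  unfolding lp_norm_def using assms by (intro powr_mono2 add_mono) auto

lemma lp_norm_strict_mono:
  assumes "0 < p" "\<bar>fst u\<bar> \<le> \<bar>fst v\<bar>" "\<bar>snd u\<bar> < \<bar>snd v\<bar>"
  shows "lp_norm p u < lp_norm p v"
  unfolding lp_norm_def using assms
  by (intro powr_less_mono2 add_le_less_mono powr_mono2) auto

lemma lp_norm_antimono:
  assumes "0 < p" "p \<le> q"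
  shows "lp_norm q v \<le> lp_norm p v"
proof -
  define n where "n = lp_norm p v"
  have coord: "z powr q \<le> z powr p * n powr (q - p)" if "0 \<le> z" "z \<le> n" for z
  proof -
    have "z powr q = z powr p * z powr (q - p)"
      by (simp flip: powr_add)
    also have "\<dots> \<le> z powr p * n powr (q - p)"
      using that assms by (intro mult_left_mono powr_mono2) auto
    finally show ?thesis .
  qed
  have "\<bar>fst v\<bar> powr q + \<bar>snd v\<bar> powr q \<le> (\<bar>fst v\<bar> powr p + \<bar>snd v\<bar> powr p) * n powr (q - p)"
    using coord[of "\<bar>fst v\<bar>"] coord[of "\<bar>snd v\<bar>"] abs_fst_le_lp_norm abs_snd_le_lp_norm assms
    by (simp add: n_def distrib_right add_mono)
  also have "\<dots> = n powr p * n powr (q - p)"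
    using lp_norm_powr[OF assms(1), of v] by (simp add: n_def)
  also have "\<dots> = n powr q"
    by (simp flip: powr_add)
  finally have "(\<bar>fst v\<bar> powr q + \<bar>snd v\<bar> powr q) powr (1 / q) \<le> (n powr q) powr (1 / q)"
    using assms by (intro powr_mono2) auto
  then show ?thesis
    using assms by (simp add: lp_norm_def n_def powr_powr lp_norm_nonneg)
qed

lemma lp_norm_le_two_powr:
  assumes "0 < q" "q \<le> p"
  shows "lp_norm q v \<le> 2 powr (1 / q - 1 / p) * lp_norm p v"
proof -
  define u where "u = \<bar>fst v\<bar> powr q"
  define w where "w = \<bar>snd v\<bar> powr q"
  define n where "n = lp_norm p v"
  have "0 \<le> u" "0 \<le> w" "0 \<le> n"
    by (simp_all add: u_def w_def n_def lp_norm_nonneg)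
  have pow_pq: "\<bar>z\<bar> powr p = (\<bar>z\<bar> powr q) powr (p / q)" for z :: real
    using assms by (simp add: powr_powr)
  have "((u + w) / 2) powr (p / q) \<le> (u powr (p / q) + w powr (p / q)) / 2"
    using convex_onD[OF convex_on_powr_nonneg, of "p / q" "1 / 2" u w] assms \<open>0 \<le> u\<close> \<open>0 \<le> w\<close>
    by (simp add: field_simps)
  also have "\<dots> = n powr p / 2"
    using lp_norm_powr[of p v] assms by (simp add: u_def w_def n_def pow_pq)
  finally have "(((u + w) / 2) powr (p / q)) powr (q / p) \<le> (n powr p / 2) powr (q / p)"
    using assms by (intro powr_mono2) auto
  then have "u + w \<le> 2 * (n powr q * (1 / 2) powr (q / p))"
    using assms \<open>0 \<le> u\<close> \<open>0 \<le> w\<close> \<open>0 \<le> n\<close> by (simp add: powr_powr powr_mult powr_divide mult_ac)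
  also have "\<dots> = 2 powr (1 - q / p) * n powr q"
    by (simp add: powr_divide powr_diff)
  also have "\<dots> = (2 powr (1 / q - 1 / p) * n) powr q"
  proof -
    have "(1 / q - 1 / p) * q = 1 - q / p"
      using assms by (simp add: field_simps)
    then show ?thesis by (simp add: powr_mult powr_powr)
  qed
  finally have "(u + w) powr (1 / q) \<le> ((2 powr (1 / q - 1 / p) * n) powr q) powr (1 / q)"
    using assms \<open>0 \<le> u\<close> \<open>0 \<le> w\<close> by (intro powr_mono2) auto
  then show ?thesis
    using assms \<open>0 \<le> n\<close> by (simp add: lp_norm_def u_def w_def n_def powr_powr)
qed

lemma lp_norm_triangle:
  assumes "1 \<le> q"
  shows "lp_norm q (u + v) \<le> lp_norm q u + lp_norm q v"
proof -
  have q: "0 < q" using assms by simp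
  have zero: "x = 0" if "lp_norm q x = 0" for x :: "real \<times> real"
    using abs_fst_le_lp_norm[OF q, of x] abs_snd_le_lp_norm[OF q, of x] that
    by (simp add: prod_eq_iff)
  show ?thesis
  proof (cases "lp_norm q u = 0 \<or> lp_norm q v = 0")
    case True
    then have "u = 0 \<or> v = 0" using zero by blast
    then show ?thesis using lp_norm_nonneg[of q u] lp_norm_nonneg[of q v] by auto
  next
    case False
    define A where "A = lp_norm q u"
    define B where "B = lp_norm q v"
    have "0 < A" "0 < B"
      using False lp_norm_nonneg[of q u] lp_norm_nonneg[of q v] by (simp_all add: A_def B_def)
    define t where "t = B / (A + B)"
    have t: "0 \<le> t" "t \<le> 1"
      using \<open>0 < A\<close> \<open>0 < B\<close> by (auto simp: t_def field_simps)
    \<comment> \<open>\<open>u + v\<close> is \<open>A + B\<close> times a convex combination of the unit vectors \<open>u / A\<close> and \<open>v / B\<close>\<close>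
    define u' where "u' = (1 / A) *\<^sub>R u"
    define v' where "v' = (1 / B) *\<^sub>R v"
    define w where "w = (1 - t) *\<^sub>R u' + t *\<^sub>R v'"
    have uv: "u + v = (A + B) *\<^sub>R w"
    proof -
      have "(A + B) * ((1 - t) * (1 / A)) = 1" "(A + B) * (t * (1 / B)) = 1"
        using \<open>0 < A\<close> \<open>0 < B\<close> by (simp_all add: t_def field_simps)
      then show ?thesis
        unfolding w_def u'_def v'_def scaleR_add_right scaleR_scaleR by simp
    qed
    have unit: "lp_norm q u' = 1" "lp_norm q v' = 1"
      using \<open>0 < A\<close> \<open>0 < B\<close> q by (simp_all add: u'_def v'_def lp_norm_scaleR A_def B_def)
    have "\<bar>fst w\<bar> powr q + \<bar>snd w\<bar> powr q
        \<le> ((1 - t) * \<bar>fst u'\<bar> powr q + t * \<bar>fst v'\<bar> powr q)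
          + ((1 - t) * \<bar>snd u'\<bar> powr q + t * \<bar>snd v'\<bar> powr q)"
      unfolding w_def using assms t by (simp add: add_mono powr_abs_convex_comb_le)
    also have "\<dots> = (1 - t) * lp_norm q u' powr q + t * lp_norm q v' powr q"
      by (simp add: lp_norm_powr[OF q] algebra_simps)
    finally have "lp_norm q w \<le> 1"
      using unit q by (simp add: lp_norm_def powr_le1)
    then show ?thesis
      using uv \<open>0 < A\<close> \<open>0 < B\<close> q by (simp add: lp_norm_scaleR A_def B_def)
  qed
qed

lemma op_norm_upper:
  assumes "bdd_above ((\<lambda>x. nY (T x)) ` {x. nX x = 1})" "nX x = 1"
  shows "nY (T x) \<le> op_norm nX nY T"
  unfolding op_norm_def using assms by (intro cSup_upper) auto

lemma op_norm_least:
  assumes "nX x0 = 1" "\<And>x. nX x = 1 \<Longrightarrow> nY (T x) \<le> M"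
  shows "op_norm nX nY T \<le> M"
  unfolding op_norm_def using assms by (intro cSup_least) auto

lemma op_norm_eq_maximum:
  assumes "nX x0 = 1" "nY (T x0) = M" "\<And>x. nX x = 1 \<Longrightarrow> nY (T x) \<le> M"
  shows "op_norm nX nY T = M"
  unfolding op_norm_def using assms by (intro cSup_eq_maximum) auto

lemma op_norm_scaleR:
  fixes T :: "'a \<Rightarrow> 'b::real_vector"
  assumes "0 \<le> s" "\<And>y. nY (s *\<^sub>R y) = s * nY y"
    and "nX x0 = 1" "bdd_above ((\<lambda>x. nY (T x)) ` {x. nX x = 1})"
  shows "op_norm nX nY (\<lambda>x. s *\<^sub>R T x) = s * op_norm nX nY T"
proof -
  have "(\<lambda>x. nY (s *\<^sub>R T x)) ` {x. nX x = 1} = (*) s ` (\<lambda>x. nY (T x)) ` {x. nX x = 1}"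
    using assms(2) by (simp add: image_image)
  moreover have "s * Sup ((\<lambda>x. nY (T x)) ` {x. nX x = 1}) = Sup ((*) s ` (\<lambda>x. nY (T x)) ` {x. nX x = 1})"
    using assms(1,3,4)
    by (intro continuous_at_Sup_mono) (auto simp: mono_def mult_left_mono intro!: continuous_intros)
  ultimately show ?thesis
    unfolding op_norm_def by simp
qed

lemma not_uniform_sBPBpI:
  assumes "0 < \<epsilon>"
    and "\<And>\<eta>. 0 < \<eta> \<Longrightarrow> \<exists>T x0. linear T \<and> op_norm nX nY T = 1 \<and> nX x0 = 1 \<and> 1 - \<eta> < nY (T x0) \<and>
           (\<forall>x1. nX x1 = 1 \<longrightarrow> nY (T x1) = 1 \<longrightarrow> \<epsilon> \<le> nX (x1 - x0))"
  shows "\<not> uniform_sBPBp nX nY"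
  unfolding uniform_sBPBp_def
  by (metis assms not_le)

lemma not_uniform_sBPBp_lp_lp_of_le:
  fixes p q :: real
  assumes "0 < p" "p \<le> q"
  shows "\<not> uniform_sBPBp (lp_norm p) (lp_norm q)"
proof (rule not_uniform_sBPBpI[of 1])
  fix \<eta> :: real
  assume "0 < \<eta>"
  define c where "c = 1 - min \<eta> 1 / 2"
  have c: "0 \<le> c" "c < 1" "1 - \<eta> < c"
    using \<open>0 < \<eta>\<close> by (auto simp: c_def)
  define T where "T = (\<lambda>v::real \<times> real. (fst v, c * snd v))"
  have q: "0 < q" using assms by simp
  have contract: "lp_norm q (T v) \<le> lp_norm p v" for v
  proof -
    have "lp_norm q (T v) \<le> lp_norm q v"
      using c q by (intro lp_norm_mono) (auto simp: T_def abs_mult mult_left_le_one_le)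
    also have "\<dots> \<le> lp_norm p v"
      using assms by (rule lp_norm_antimono)
    finally show ?thesis .
  qed
  \<comment> \<open>\<open>T\<close> attains its norm only on the horizontal axis\<close>
  have far: "1 \<le> lp_norm p (v - (0, 1))" if "lp_norm p v = 1" "lp_norm q (T v) = 1" for v
  proof -
    have "snd v = 0"
    proof (rule ccontr)
      assume "snd v \<noteq> 0"
      then have "lp_norm q (T v) < lp_norm q v"
        using c q by (intro lp_norm_strict_mono) (auto simp: T_def abs_mult)
      also have "\<dots> \<le> lp_norm p v"
        using assms by (rule lp_norm_antimono)
      finally show False using that by simp
    qed
    then have "\<bar>fst v\<bar> = 1"
      using that(1) lp_norm_Pair_zero_snd[OF assms(1), of "fst v"] by (metis prod.collapse)
    then show ?thesis
      using abs_fst_le_lp_norm[OF assms(1), of "v - (0, 1)"] by simp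
  qed
  have "linear T"
    unfolding T_def by (intro linearI) (auto simp: algebra_simps)
  moreover have "op_norm (lp_norm p) (lp_norm q) T = 1"
  proof (rule op_norm_eq_maximum)
    show "lp_norm p (1, 0) = 1" "lp_norm q (T (1, 0)) = 1"
      using assms q by (simp_all add: T_def lp_norm_Pair_zero_snd)
    show "lp_norm q (T v) \<le> 1" if "lp_norm p v = 1" for v
      using contract[of v] that by simp
  qed
  moreover have "lp_norm p (0, 1) = 1" "lp_norm q (T (0, 1)) = c"
    using assms q c by (simp_all add: T_def lp_norm_Pair_zero_fst)
  ultimately show "\<exists>T x0. linear T \<and> op_norm (lp_norm p) (lp_norm q) T = 1 \<and> lp_norm p x0 = 1 \<and>
      1 - \<eta> < lp_norm q (T x0) \<and> (\<forall>x1. lp_norm p x1 = 1 \<longrightarrow> lp_norm q (T x1) = 1 \<longrightarrow> 1 \<le> lp_norm p (x1 - x0))"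
    using c far by metis
qed simp

definition cross_map :: "real \<Rightarrow> real \<times> real \<Rightarrow> real \<times> real" where
  "cross_map c v = v + c *\<^sub>R prod.swap v"

lemma linear_cross_map: "linear (cross_map c)"
  unfolding cross_map_def by (intro linearI) (auto simp: algebra_simps)

lemma lp_norm_cross_map_le:
  assumes "1 \<le> q" "0 \<le> c"
  shows "lp_norm q (cross_map c v) \<le> (1 + c) * lp_norm q v"
proof -
  have "lp_norm q (cross_map c v) \<le> lp_norm q v + lp_norm q (c *\<^sub>R prod.swap v)"
    unfolding cross_map_def using assms(1) by (rule lp_norm_triangle)
  also have "\<dots> = (1 + c) * lp_norm q v"
    using assms by (simp add: lp_norm_scaleR lp_norm_swap algebra_simps)
  finally show ?thesis .
qed

lemma abs_add_less_abs_diff: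
  fixes a b :: real
  assumes "a * b < 0"
  shows "\<bar>a + b\<bar> < \<bar>a - b\<bar>"
  using assms by (auto simp: mult_less_0_iff abs_if)

lemma lp_norm_cross_map_less_flip:
  assumes "0 < q" "0 < c" "fst v * snd v < 0"
  shows "lp_norm q (cross_map c v) < lp_norm q (cross_map c (fst v, - snd v))"
proof -
  obtain x y where v: "v = (x, y)" by fastforce
  have "x * (c * y) < 0" "y * (c * x) < 0"
    using assms by (auto simp: v mult_less_0_iff)
  then have "\<bar>x + c * y\<bar> < \<bar>x - c * y\<bar>" "\<bar>y + c * x\<bar> < \<bar>c * x - y\<bar>"
    using abs_add_less_abs_diff abs_minus_commute by metis+
  then show ?thesis
    using assms(1) by (intro lp_norm_strict_mono) (auto simp: cross_map_def v)
qed

definition antidiag_unit :: "real \<Rightarrow> real \<times> real" where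
  "antidiag_unit p = (2 powr (- 1 / p), - (2 powr (- 1 / p)))"

lemma lp_norm_antidiag_unit:
  assumes "0 < p" "0 < q"
  shows "lp_norm q (antidiag_unit p) = 2 powr (1 / q - 1 / p)"
  using assms by (simp add: antidiag_unit_def lp_norm_Pair_minus flip: powr_add)

lemma cross_map_antidiag_unit: "cross_map c (antidiag_unit p) = (1 - c) *\<^sub>R antidiag_unit p"
  by (simp add: cross_map_def antidiag_unit_def algebra_simps)

lemma lp_norm_diff_antidiag_unit_ge:
  assumes "1 \<le> p" "0 \<le> fst v * snd v"
  shows "1 / 2 \<le> lp_norm p (v - antidiag_unit p)"
proof -
  define a where "a = 2 powr (- 1 / p)"
  have "2 powr (1 / p) \<le> 2 powr 1"
    using assms by (intro powr_mono) auto
  then have "1 / 2 \<le> a"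
    by (simp add: a_def powr_minus_divide field_simps)
  moreover have "a \<le> \<bar>fst (v - antidiag_unit p)\<bar> \<or> a \<le> \<bar>snd (v - antidiag_unit p)\<bar>"
    using assms(2) by (auto simp: antidiag_unit_def a_def zero_le_mult_iff)
  ultimately show ?thesis
    using abs_fst_le_lp_norm[of p "v - antidiag_unit p"] abs_snd_le_lp_norm[of p "v - antidiag_unit p"] assms(1)
    by linarith
qed

lemma lp_norm_cross_map_le_on_sphere:
  assumes "1 \<le> q" "q \<le> p" "0 \<le> c" "lp_norm p v = 1"
  shows "lp_norm q (cross_map c v) \<le> (1 + c) * 2 powr (1 / q - 1 / p)"
proof -
  have "lp_norm q (cross_map c v) \<le> (1 + c) * lp_norm q v"
    using assms by (intro lp_norm_cross_map_le)
  also have "\<dots> \<le> (1 + c) * 2 powr (1 / q - 1 / p)"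
    using lp_norm_le_two_powr[of q p v] assms by (intro mult_left_mono) auto
  finally show ?thesis .
qed

lemma bdd_above_cross_map_sphere:
  assumes "1 \<le> q" "q \<le> p" "0 \<le> c"
  shows "bdd_above ((\<lambda>x. lp_norm q (cross_map c x)) ` {x. lp_norm p x = 1})"
  using lp_norm_cross_map_le_on_sphere[OF assms]
  by (intro bdd_aboveI2[where M = "(1 + c) * 2 powr (1 / q - 1 / p)"]) simp

lemma op_norm_cross_map_bounds:
  assumes "1 \<le> q" "q \<le> p" "0 \<le> c" "c \<le> 1"
  shows "(1 - c) * 2 powr (1 / q - 1 / p) \<le> op_norm (lp_norm p) (lp_norm q) (cross_map c)"
    and "op_norm (lp_norm p) (lp_norm q) (cross_map c) \<le> (1 + c) * 2 powr (1 / q - 1 / p)"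
proof -
  have unit: "lp_norm p (antidiag_unit p) = 1"
    using assms lp_norm_antidiag_unit[of p p] by simp
  have "lp_norm q (cross_map c (antidiag_unit p)) = (1 - c) * 2 powr (1 / q - 1 / p)"
    using assms by (simp add: cross_map_antidiag_unit lp_norm_scaleR lp_norm_antidiag_unit)
  then show "(1 - c) * 2 powr (1 / q - 1 / p) \<le> op_norm (lp_norm p) (lp_norm q) (cross_map c)"
    using op_norm_upper[where nY = "lp_norm q" and T = "cross_map c",
        OF bdd_above_cross_map_sphere[OF assms(1-3)] unit]
    by simp
  show "op_norm (lp_norm p) (lp_norm q) (cross_map c) \<le> (1 + c) * 2 powr (1 / q - 1 / p)"
    using unit lp_norm_cross_map_le_on_sphere[OF assms(1-3)] by (rule op_norm_least)
qed

lemma cross_map_norming_same_sign: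
  assumes "1 \<le> q" "q \<le> p" "0 < c"
    and v: "lp_norm p v = 1" "lp_norm q (cross_map c v) = op_norm (lp_norm p) (lp_norm q) (cross_map c)"
  shows "0 \<le> fst v * snd v"
proof (rule ccontr)
  assume "\<not> 0 \<le> fst v * snd v"
  then have "lp_norm q (cross_map c v) < lp_norm q (cross_map c (fst v, - snd v))"
    using assms by (intro lp_norm_cross_map_less_flip) auto
  also have "\<dots> \<le> op_norm (lp_norm p) (lp_norm q) (cross_map c)"
    using bdd_above_cross_map_sphere[of q p c] assms by (intro op_norm_upper) (auto simp: lp_norm_def)
  finally show False using v(2) by simp
qed

lemma not_uniform_sBPBp_lp_lp_of_gt:
  fixes p q :: real
  assumes "1 \<le> q" "q < p"
  shows "\<not> uniform_sBPBp (lp_norm p) (lp_norm q)"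
proof (rule not_uniform_sBPBpI[of "1 / 2"])
  fix \<eta> :: real
  assume "0 < \<eta>"
  define c where "c = min \<eta> 1 / 4"
  have c: "0 < c" "c < 1" "2 * c < \<eta>"
    using \<open>0 < \<eta>\<close> by (auto simp: c_def)
  define K where "K = 2 powr (1 / q - 1 / p)"
  define N where "N = op_norm (lp_norm p) (lp_norm q) (cross_map c)"
  define x0 where "x0 = antidiag_unit p"
  have N: "(1 - c) * K \<le> N" "N \<le> (1 + c) * K"
    using op_norm_cross_map_bounds[of q p c] assms c by (simp_all add: N_def K_def)
  have "0 < K"
    by (simp add: K_def)
  then have "0 < (1 - c) * K"
    using c by simp
  then have "0 < N"
    using N(1) by linarith
  define T where "T = (\<lambda>v. (1 / N) *\<^sub>R cross_map c v)"
  have T_norm: "lp_norm q (T v) = lp_norm q (cross_map c v) / N" for v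
    using assms \<open>0 < N\<close> by (simp add: T_def lp_norm_scaleR)
  have x0: "lp_norm p x0 = 1" "lp_norm q (T x0) = (1 - c) * K / N"
    using assms c lp_norm_antidiag_unit[of p p]
    by (simp_all add: x0_def T_norm K_def cross_map_antidiag_unit lp_norm_scaleR lp_norm_antidiag_unit)
  have "linear T"
    unfolding T_def using linear_cross_map by (rule linear_compose_scale_right)
  moreover have "op_norm (lp_norm p) (lp_norm q) T = 1"
    using op_norm_scaleR[of "1 / N" "lp_norm q", OF _ _ x0(1) bdd_above_cross_map_sphere[of q p c]]
      assms c \<open>0 < N\<close> by (simp add: T_def N_def lp_norm_scaleR)
  moreover have "1 - \<eta> < lp_norm q (T x0)"
  proof -
    have "1 - \<eta> < 1 - 2 * c"
      using c by simp
    also have "\<dots> \<le> (1 - c) / (1 + c)"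
      using c by (simp add: field_simps)
    also have "\<dots> = (1 - c) * K / ((1 + c) * K)"
      using \<open>0 < K\<close> by simp
    also have "\<dots> \<le> (1 - c) * K / N"
      using N(2) \<open>0 < N\<close> \<open>0 < K\<close> c by (intro divide_left_mono) auto
    also have "\<dots> = lp_norm q (T x0)"
      using x0(2) by simp
    finally show ?thesis .
  qed
  moreover have "1 / 2 \<le> lp_norm p (x1 - x0)" if "lp_norm p x1 = 1" "lp_norm q (T x1) = 1" for x1
  proof -
    have "lp_norm q (cross_map c x1) = N"
      using that(2) \<open>0 < N\<close> by (simp add: T_norm)
    then have "0 \<le> fst x1 * snd x1"
      using cross_map_norming_same_sign[of q p c] assms c that(1) by (simp add: N_def)
    then show ?thesis
      using assms unfolding x0_def by (intro lp_norm_diff_antidiag_unit_ge) auto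
  qed
  ultimately show "\<exists>T x0. linear T \<and> op_norm (lp_norm p) (lp_norm q) T = 1 \<and> lp_norm p x0 = 1 \<and>
      1 - \<eta> < lp_norm q (T x0) \<and>
      (\<forall>x1. lp_norm p x1 = 1 \<longrightarrow> lp_norm q (T x1) = 1 \<longrightarrow> 1 / 2 \<le> lp_norm p (x1 - x0))"
    using x0(1) by blast
qed simp

theorem mainTheorem11:
  fixes p q :: real
  assumes "1 < p" "p \<le> 2" "1 \<le> q" "q \<le> 2"
  shows "\<not> uniform_sBPBp (lp_norm p) (lp_norm q)"
proof (cases "p \<le> q")
  case True
  then show ?thesis
    using assms by (intro not_uniform_sBPBp_lp_lp_of_le) auto
next
  case False
  then show ?thesis
    using assms by (intro not_uniform_sBPBp_lp_lp_of_gt) auto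
qed

end
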